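(* Let $i$ be an agent and let $\prec$ be either $\prec_i$ or $\prec_i^{\mathsf{real}}$. Then for all $\varphi,\psi,\varphi_1,\varphi_2,\varphi_3\in\mathcal{L}$: (1) $\models\neg(\varphi\prec\varphi)$; (2) $\models(\psi\prec\varphi)\to\neg(\varphi\prec\psi)$; (3) $\models((\varphi_1\prec\varphi_2)\wedge(\varphi_2\prec\varphi_3))\to(\varphi_1\prec\varphi_3)$. Here $\psi\prec_i\varphi:=(\mathsf{M}_i\varphi\wedge\neg\mathsf{M}_i\psi)\vee(\mathsf{D}_i\psi\wedge\neg\mathsf{D}_i\varphi)$ and $\psi\prec_i^{\mathsf{real}}\varphi:=(\mathsf{M}^{\mathsf{real}}_i\varphi\wedge\neg\mathsf{M}^{\mathsf{real}}_i\psi)\vee(\mathsf{D}^{\mathsf{real}}_i\psi\wedge\neg\mathsf{D}^{\mathsf{real}}_i\varphi)$, with $\mathsf{M}_i\varphi:=\mathcal{A}_i\varphi\wedge\neg\mathcal{R}_i\varphi$, $\mathsf{D}_i\varphi:=\mathcal{R}_i\varphi\wedge\neg\mathcal{A}_i\varphi$, $\mathsf{M}^{\mathsf{real}}_i\varphi:=\mathcal{A}^{\mathsf{real}}_i\varphi\wedge\neg\mathcal{R}^{\mathsf{real}}_i\varphi$, $\mathsf{D}^{\mathsf{real}}_i\varphi:=\mathcal{R}^{\mathsf{real}}_i\varphi\wedge\neg\mathcal{A}^{\mathsf{real}}_i\varphi$.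
   Context: Let $\mathit{Agt}=\{1,\dots,n\}$ and $\mathit{Atm}$ a countably infinite set of atoms containing special atoms $\mathsf{rew}_i,\mathsf{pun}_i$ for each $i$. $\mathcal{L}_0$: $\alpha::=p\mid\neg\alpha\mid\alpha\wedge\alpha\mid\triangle_i\alpha$. A state is $S=((B_i)_i,V)$ with $B_i\subseteq\mathcal{L}_0$, $V\subseteq\mathit{Atm}$; $S\models p$ iff $p\in V$, Boolean as usual, $S\models\triangle_i\alpha$ iff $\alpha\in B_i$. $S\mathcal{E}_iS'$ iff $S'\models\alpha$ for all $\alpha\in B_i$; $S\mathcal{A}_iS'$ iff $S'\models\alpha$ for some $\alpha$ with $(\alpha\to\mathsf{rew}_i)\in B_i$; $S\mathcal{R}_iS'$ iff $S'\models\alpha$ for some $\alpha$ with $(\alpha\to\mathsf{pun}_i)\in B_i$. A model is $(S,U)$ with $S\in U$, $U$ a set of states. $\mathcal{L}$: $\varphi::=\alpha\mid\neg\varphi\mid\varphi\wedge\varphi\mid\Box_i\varphi\mid\mathcal{A}_i\varphi\mid\mathcal{R}_i\varphi\mid\mathcal{A}^{\mathsf{real}}_i\varphi\mid\mathcal{R}^{\mathsf{real}}_i\varphi$. Semantics: $(S,U)\models\alpha$ iff $S\models\alpha$; $(S,U)\models\Box_i\varphi$ iff all $S'\in U$ with $S\mathcal{E}_iS'$ satisfy $\varphi$; $(S,U)\models\mathcal{A}_i\varphi$ (resp. $\mathcal{R}_i\varphi$) iff every $S'\in U$ satisfying $\varphi$ has $S\mathcal{A}_iS'$ (resp. $S\mathcal{R}_iS'$);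 $(S,U)\models\mathcal{A}^{\mathsf{real}}_i\varphi$ (resp. $\mathcal{R}^{\mathsf{real}}_i\varphi$) iff every $S'\in U$ satisfying $\varphi$ with $S\mathcal{E}_iS'$ has $S\mathcal{A}_iS'$ (resp. $S\mathcal{R}_iS'$). $\models\varphi$ means true in all models. *)

theory Defs
  imports Main
begin

datatype 'ag atm = Rew 'ag | Pun 'ag | Prop nat

datatype 'ag fm0 =
    Atom0 "'ag atm"
  | Neg0 "'ag fm0"
  | And0 "'ag fm0" "'ag fm0"
  | Bel0 'ag "'ag fm0"

definition Imp0 :: "'ag fm0 \<Rightarrow> 'ag fm0 \<Rightarrow> 'ag fm0" where
  "Imp0 a b = Neg0 (And0 a (Neg0 b))"

type_synonym 'ag state = "('ag \<Rightarrow> 'ag fm0 set) \<times> 'ag atm set"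

fun sat0 :: "'ag state \<Rightarrow> 'ag fm0 \<Rightarrow> bool" where
  "sat0 S (Atom0 p) = (p \<in> snd S)"
| "sat0 S (Neg0 a) = (\<not> sat0 S a)"
| "sat0 S (And0 a b) = (sat0 S a \<and> sat0 S b)"
| "sat0 S (Bel0 i a) = (a \<in> fst S i)"

definition relE :: "'ag \<Rightarrow> 'ag state \<Rightarrow> 'ag state \<Rightarrow> bool" where
  "relE i S S' = (\<forall>a \<in> fst S i. sat0 S' a)"

definition relA :: "'ag \<Rightarrow> 'ag state \<Rightarrow> 'ag state \<Rightarrow> bool" where
  "relA i S S' = (\<exists>a. Imp0 a (Atom0 (Rew i)) \<in> fst S i \<and> sat0 S' a)"

definition relR :: "'ag \<Rightarrow> 'ag state \<Rightarrow> 'ag state \<Rightarrow> bool" where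
  "relR i S S' = (\<exists>a. Imp0 a (Atom0 (Pun i)) \<in> fst S i \<and> sat0 S' a)"

datatype 'ag fm =
    Base "'ag fm0"
  | Neg "'ag fm"
  | And "'ag fm" "'ag fm"
  | Box 'ag "'ag fm"
  | Att 'ag "'ag fm"
  | Rep 'ag "'ag fm"
  | AttReal 'ag "'ag fm"
  | RepReal 'ag "'ag fm"

fun sat :: "'ag state \<Rightarrow> 'ag state set \<Rightarrow> 'ag fm \<Rightarrow> bool" where
  "sat S U (Base a) = sat0 S a"
| "sat S U (Neg f) = (\<not> sat S U f)"
| "sat S U (And f g) = (sat S U f \<and> sat S U g)"
| "sat S U (Box i f) = (\<forall>S' \<in> U. relE i S S' \<longrightarrow> sat S' U f)"
| "sat S U (Att i f) = (\<forall>S' \<in> U. sat S' U f \<longrightarrow> relA i S S')"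
| "sat S U (Rep i f) = (\<forall>S' \<in> U. sat S' U f \<longrightarrow> relR i S S')"
| "sat S U (AttReal i f) = (\<forall>S' \<in> U. sat S' U f \<and> relE i S S' \<longrightarrow> relA i S S')"
| "sat S U (RepReal i f) = (\<forall>S' \<in> U. sat S' U f \<and> relE i S S' \<longrightarrow> relR i S S')"

definition valid :: "'ag fm \<Rightarrow> bool" where
  "valid f = (\<forall>S U. S \<in> U \<longrightarrow> sat S U f)"

definition Or :: "'ag fm \<Rightarrow> 'ag fm \<Rightarrow> 'ag fm" where
  "Or f g = Neg (And (Neg f) (Neg g))"

definition Imp :: "'ag fm \<Rightarrow> 'ag fm \<Rightarrow> 'ag fm" where
  "Imp f g = Neg (And f (Neg g))"

definition M :: "'ag \<Rightarrow> 'ag fm \<Rightarrow> 'ag fm" where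
  "M i f = And (Att i f) (Neg (Rep i f))"
definition D :: "'ag \<Rightarrow> 'ag fm \<Rightarrow> 'ag fm" where
  "D i f = And (Rep i f) (Neg (Att i f))"
definition MReal :: "'ag \<Rightarrow> 'ag fm \<Rightarrow> 'ag fm" where
  "MReal i f = And (AttReal i f) (Neg (RepReal i f))"
definition DReal :: "'ag \<Rightarrow> 'ag fm \<Rightarrow> 'ag fm" where
  "DReal i f = And (RepReal i f) (Neg (AttReal i f))"

text \<open>Prec i psi phi  stands for  psi \<prec>_i phi.\<close>
definition Prec :: "'ag \<Rightarrow> 'ag fm \<Rightarrow> 'ag fm \<Rightarrow> 'ag fm" where
  "Prec i psi phi = Or (And (M i phi) (Neg (M i psi))) (And (D i psi) (Neg (D i phi)))"
definition PrecReal :: "'ag \<Rightarrow> 'ag fm \<Rightarrow> 'ag fm \<Rightarrow> 'ag fm" where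
  "PrecReal i psi phi = Or (And (MReal i phi) (Neg (MReal i psi))) (And (DReal i psi) (Neg (DReal i phi)))"

end

theory Submission
  imports Defs
begin

text \<open>Since \<open>M\<^sub>i \<phi>\<close> and \<open>D\<^sub>i \<phi>\<close> exclude each other, every formula gets a valence at the
  current model: 2 if it is merely attractive, 0 if merely repulsive, 1 otherwise. Then
  \<open>\<psi> \<prec>\<^sub>i \<phi>\<close> holds exactly when the valence of \<open>\<psi>\<close> is below that of \<open>\<phi>\<close>, so \<open>\<prec>\<^sub>i\<close> is the
  pullback of the strict order on numbers and inherits irreflexivity, asymmetry and
  transitivity.\<close>

definition valence :: "('a \<Rightarrow> bool) \<Rightarrow> ('a \<Rightarrow> bool) \<Rightarrow> 'a \<Rightarrow> nat" where
  "valence m d x = (if m x then 2 else if d x then 0 else 1)"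

lemma less_valence_iff:
  assumes "\<And>x. m x \<Longrightarrow> \<not> d x"
  shows "valence m d p < valence m d q \<longleftrightarrow> (m q \<and> \<not> m p) \<or> (d p \<and> \<not> d q)"
  using assms by (auto simp: valence_def)

lemma sat_M_imp_not_sat_D: "sat S U (M i f) \<Longrightarrow> \<not> sat S U (D i f)"
  by (simp add: M_def D_def)

lemma sat_MReal_imp_not_sat_DReal: "sat S U (MReal i f) \<Longrightarrow> \<not> sat S U (DReal i f)"
  by (simp add: MReal_def DReal_def)

lemma sat_Prec_iff_less_valence:
  "sat S U (Prec i \<psi> \<phi>) \<longleftrightarrow>
     valence (\<lambda>f. sat S U (M i f)) (\<lambda>f. sat S U (D i f)) \<psi>
       < valence (\<lambda>f. sat S U (M i f)) (\<lambda>f. sat S U (D i f)) \<phi>"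
  by (subst less_valence_iff) (auto simp: Prec_def Or_def sat_M_imp_not_sat_D)

lemma sat_PrecReal_iff_less_valence:
  "sat S U (PrecReal i \<psi> \<phi>) \<longleftrightarrow>
     valence (\<lambda>f. sat S U (MReal i f)) (\<lambda>f. sat S U (DReal i f)) \<psi>
       < valence (\<lambda>f. sat S U (MReal i f)) (\<lambda>f. sat S U (DReal i f)) \<phi>"
  by (subst less_valence_iff) (auto simp: PrecReal_def Or_def sat_MReal_imp_not_sat_DReal)

lemma valid_strict_order_if_sat_less_rank:
  fixes rank :: "'ag state \<Rightarrow> 'ag state set \<Rightarrow> 'ag fm \<Rightarrow> 'b::order"
  assumes "\<And>S U \<psi> \<phi>. sat S U (prec \<psi> \<phi>) \<longleftrightarrow> rank S U \<psi> < rank S U \<phi>"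
  shows "(\<forall>\<phi>. valid (Neg (prec \<phi> \<phi>)))
       \<and> (\<forall>\<phi> \<psi>. valid (Imp (prec \<psi> \<phi>) (Neg (prec \<phi> \<psi>))))
       \<and> (\<forall>\<phi>1 \<phi>2 \<phi>3. valid (Imp (And (prec \<phi>1 \<phi>2) (prec \<phi>2 \<phi>3)) (prec \<phi>1 \<phi>3)))"
  by (auto simp: valid_def Imp_def assms)

theorem proposition2:
  fixes i :: "'ag::finite"
  assumes "prec = Prec i \<or> prec = PrecReal i"
  shows "(\<forall>\<phi>. valid (Neg (prec \<phi> \<phi>)))
       \<and> (\<forall>\<phi> \<psi>. valid (Imp (prec \<psi> \<phi>) (Neg (prec \<phi> \<psi>))))
       \<and> (\<forall>\<phi>1 \<phi>2 \<phi>3. valid (Imp (And (prec \<phi>1 \<phi>2) (prec \<phi>2 \<phi>3)) (prec \<phi>1 \<phi>3)))"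
  using assms
proof
  assume "prec = Prec i"
  then show ?thesis
    by (intro valid_strict_order_if_sat_less_rank) (simp add: sat_Prec_iff_less_valence)
next
  assume "prec = PrecReal i"
  then show ?thesis
    by (intro valid_strict_order_if_sat_less_rank) (simp add: sat_PrecReal_iff_less_valence)
qed

end
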